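(* Let $\mathcal I_{CAS}=\langle\mathcal I,\chi\rangle$ be a CAS-model of a DL-Lite$_R$ DKB $\mathcal K$ such that $\mathit{uni}_{\mathcal K}(\mathcal I_{CAS})=\{e_1,\dots,e_m\}$. Let $c_1,\dots,c_m$ be fresh individual names and $A$ a fresh concept name. Then $\mathcal I'_{CAS}=\langle\mathcal I',\chi\rangle$, where $\mathcal I'$ agrees with $\mathcal I$ except that $c_i^{\mathcal I'}=e_i$ for $i=1,\dots,m$ and $A^{\mathcal I'}=\{e_1,\dots,e_m\}$, is a CAS-model of $\mathcal K'=\mathcal K\cup\{A(c_1),\dots,A(c_m)\}$.
   Context: DL-Lite$_R$: pairwise disjoint countably infinite sets $\mathrm{NC}$, $\mathrm{NR}$, $\mathrm{NI}$; a role is $R$ or $R^-$; concepts $C ::= A\mid\exists R$ (left), $D ::= A\mid\neg C\mid\exists R$ (right). Axioms: $C\sqsubseteq D$, $S\sqsubseteq R$, $\mathrm{Dis}(R,S)$, $\mathrm{Inv}(R,S)$, $\mathrm{Irr}(R)$ (no reflexivity), assertions $D(a)$, $R(a,b)$, usual semantics. Standard name assumption: an infinite set $\mathrm{NI}_S\subseteq\mathrm{NI}$ of standard names is the domain of every interpretation, $c^{\mathcal I}=c$ for $c\in\mathrm{NI}_S$. Axioms are identified with universal first-order sentences $\forall\vec x\,\phi_\alpha(\vec x)$ via the standard translation with right-hand existentials Skolemized; $\alpha(\vec e):=\phi_\alpha(\vec e)$. A DKB $\mathcal K$ is a finite set of DL-Lite$_R$ axioms and defeasible axioms $\mathrm D(\alpha)$;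 $N_{\mathcal K}$ its individuals. A clashing assumption is a pair $\langle\alpha,\vec e\rangle$ with $\alpha(\vec e)$ an instantiation. $\langle\mathcal I,\chi\rangle$ ($\chi$ a set of clashing assumptions) is a CAS-model of $\mathcal K$ if $\mathcal I$ satisfies the non-defeasible axioms of $\mathcal K$ and $\mathcal I\models\phi_\alpha(\vec d)$ for all $\mathrm D(\alpha)\in\mathcal K$ and tuples $\vec d$ with $\langle\alpha,\vec d\rangle\notin\chi$. $\mathit{uni}_{\mathcal K}(\langle\mathcal I,\chi\rangle)=\{e\mid e \text{ occurs in some }\langle\alpha,\vec e\rangle\in\chi\}\setminus\{c^{\mathcal I}\mid c\in N_{\mathcal K}\}$ (elements in clashing assumptions not named by $\mathcal K$). *)

theory Defs
  imports Main
begin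

text \<open>'c: concept names (NC), 'r: role names (NR), 'n: individual names (NI).\<close>

datatype 'r role = Role 'r | RInv 'r

datatype ('c, 'r) lconcept = LAtom 'c | LExists "'r role"

datatype ('c, 'r) rconcept = RAtom 'c | RNeg "('c, 'r) lconcept" | RExists "'r role"

datatype ('c, 'r, 'n) axiom =
    CIncl "('c, 'r) lconcept" "('c, 'r) rconcept"
  | RIncl "'r role" "'r role"
  | DisAx "'r role" "'r role"
  | InvAx "'r role" "'r role"
  | IrrAx "'r role"
  | CAssert "('c, 'r) rconcept" 'n
  | RAssert "'r role" 'n 'n

datatype ('c, 'r, 'n) daxiom = Strict "('c, 'r, 'n) axiom" | Defeasible "('c, 'r, 'n) axiom"

type_synonym ('c, 'r, 'n) dkb = "('c, 'r, 'n) daxiom set"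

text \<open>The domain is the set NIS of standard names; standard names denote themselves.\<close>

record ('c, 'r, 'n) interp =
  conc :: "'c \<Rightarrow> 'n set"
  rol  :: "'r \<Rightarrow> ('n \<times> 'n) set"
  ind  :: "'n \<Rightarrow> 'n"

definition is_interp :: "'n set \<Rightarrow> ('c, 'r, 'n) interp \<Rightarrow> bool" where
  "is_interp NIS I \<longleftrightarrow>
     (\<forall>A. conc I A \<subseteq> NIS) \<and> (\<forall>R. rol I R \<subseteq> NIS \<times> NIS) \<and>
     (\<forall>a. ind I a \<in> NIS) \<and> (\<forall>a\<in>NIS. ind I a = a)"

fun role_ext :: "('c, 'r, 'n) interp \<Rightarrow> 'r role \<Rightarrow> ('n \<times> 'n) set" where
  "role_ext I (Role R) = rol I R"
| "role_ext I (RInv R) = (rol I R)\<inverse>"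

fun lc_ext :: "('c, 'r, 'n) interp \<Rightarrow> ('c, 'r) lconcept \<Rightarrow> 'n set" where
  "lc_ext I (LAtom A) = conc I A"
| "lc_ext I (LExists R) = Domain (role_ext I R)"

fun rc_ext :: "'n set \<Rightarrow> ('c, 'r, 'n) interp \<Rightarrow> ('c, 'r) rconcept \<Rightarrow> 'n set" where
  "rc_ext NIS I (RAtom A) = conc I A"
| "rc_ext NIS I (RNeg C) = NIS - lc_ext I C"
| "rc_ext NIS I (RExists R) = Domain (role_ext I R)"

text \<open>Number of universally quantified variables of the standard translation.\<close>
fun arity :: "('c, 'r, 'n) axiom \<Rightarrow> nat" where
  "arity (CIncl C D) = 1"
| "arity (RIncl S R) = 2"
| "arity (DisAx R S) = 2"
| "arity (InvAx R S) = 2"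
| "arity (IrrAx R) = 1"
| "arity (CAssert D a) = 0"
| "arity (RAssert R a b) = 0"

text \<open>inst NIS I alpha ds: the interpretation satisfies the instantiation \<alpha>(ds),
  i.e. I \<Turnstile> \<phi>_\<alpha>(ds).  (Skolemized right-hand existentials are read existentially per element.)\<close>
fun inst :: "'n set \<Rightarrow> ('c, 'r, 'n) interp \<Rightarrow> ('c, 'r, 'n) axiom \<Rightarrow> 'n list \<Rightarrow> bool" where
  "inst NIS I (CIncl C D) [x] = (x \<in> lc_ext I C \<longrightarrow> x \<in> rc_ext NIS I D)"
| "inst NIS I (RIncl S R) [x, y] = ((x, y) \<in> role_ext I S \<longrightarrow> (x, y) \<in> role_ext I R)"
| "inst NIS I (DisAx R S) [x, y] = (\<not> ((x, y) \<in> role_ext I R \<and> (x, y) \<in> role_ext I S))"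
| "inst NIS I (InvAx R S) [x, y] = ((x, y) \<in> role_ext I R \<longleftrightarrow> (y, x) \<in> role_ext I S)"
| "inst NIS I (IrrAx R) [x] = ((x, x) \<notin> role_ext I R)"
| "inst NIS I (CAssert D a) [] = (ind I a \<in> rc_ext NIS I D)"
| "inst NIS I (RAssert R a b) [] = ((ind I a, ind I b) \<in> role_ext I R)"
| "inst NIS I _ _ = False"

definition is_tuple :: "'n set \<Rightarrow> ('c, 'r, 'n) axiom \<Rightarrow> 'n list \<Rightarrow> bool" where
  "is_tuple NIS \<alpha> ds \<longleftrightarrow> length ds = arity \<alpha> \<and> set ds \<subseteq> NIS"

definition sat_ax :: "'n set \<Rightarrow> ('c, 'r, 'n) interp \<Rightarrow> ('c, 'r, 'n) axiom \<Rightarrow> bool" where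
  "sat_ax NIS I \<alpha> \<longleftrightarrow> (\<forall>ds. is_tuple NIS \<alpha> ds \<longrightarrow> inst NIS I \<alpha> ds)"

text \<open>A clashing assumption is a pair (\<alpha>, e) with \<alpha>(e) an instantiation.\<close>
definition cas_model ::
  "'n set \<Rightarrow> ('c, 'r, 'n) dkb \<Rightarrow> ('c, 'r, 'n) interp \<Rightarrow> (('c, 'r, 'n) axiom \<times> 'n list) set \<Rightarrow> bool" where
  "cas_model NIS K I \<chi> \<longleftrightarrow>
     is_interp NIS I \<and>
     (\<forall>(\<alpha>, es) \<in> \<chi>. is_tuple NIS \<alpha> es) \<and>
     (\<forall>\<alpha>. Strict \<alpha> \<in> K \<longrightarrow> sat_ax NIS I \<alpha>) \<and>
     (\<forall>\<alpha> ds. Defeasible \<alpha> \<in> K \<longrightarrow> is_tuple NIS \<alpha> ds \<longrightarrow> (\<alpha>, ds) \<notin> \<chi> \<longrightarrow> inst NIS I \<alpha> ds)"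

fun ax_inds :: "('c, 'r, 'n) axiom \<Rightarrow> 'n set" where
  "ax_inds (CAssert D a) = {a}"
| "ax_inds (RAssert R a b) = {a, b}"
| "ax_inds _ = {}"

fun lc_names :: "('c, 'r) lconcept \<Rightarrow> 'c set" where
  "lc_names (LAtom A) = {A}"
| "lc_names (LExists R) = {}"

fun rc_names :: "('c, 'r) rconcept \<Rightarrow> 'c set" where
  "rc_names (RAtom A) = {A}"
| "rc_names (RNeg C) = lc_names C"
| "rc_names (RExists R) = {}"

fun ax_concepts :: "('c, 'r, 'n) axiom \<Rightarrow> 'c set" where
  "ax_concepts (CIncl C D) = lc_names C \<union> rc_names D"
| "ax_concepts (CAssert D a) = rc_names D"
| "ax_concepts _ = {}"

fun dax_ax :: "('c, 'r, 'n) daxiom \<Rightarrow> ('c, 'r, 'n) axiom" where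
  "dax_ax (Strict \<alpha>) = \<alpha>"
| "dax_ax (Defeasible \<alpha>) = \<alpha>"

definition inds_K :: "('c, 'r, 'n) dkb \<Rightarrow> 'n set" where
  "inds_K K = (\<Union>\<beta>\<in>K. ax_inds (dax_ax \<beta>))"

definition concepts_K :: "('c, 'r, 'n) dkb \<Rightarrow> 'c set" where
  "concepts_K K = (\<Union>\<beta>\<in>K. ax_concepts (dax_ax \<beta>))"

definition uni_K ::
  "('c, 'r, 'n) dkb \<Rightarrow> ('c, 'r, 'n) interp \<Rightarrow> (('c, 'r, 'n) axiom \<times> 'n list) set \<Rightarrow> 'n set" where
  "uni_K K I \<chi> = {e. \<exists>\<alpha> ds. (\<alpha>, ds) \<in> \<chi> \<and> e \<in> set ds} - ind I ` inds_K K"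

definition extend_interp ::
  "('c, 'r, 'n) interp \<Rightarrow> 'c \<Rightarrow> 'n list \<Rightarrow> 'n list \<Rightarrow> ('c, 'r, 'n) interp" where
  "extend_interp I A cs es =
     I\<lparr>conc := (conc I)(A := set es),
       ind := (\<lambda>a. case map_of (zip cs es) a of None \<Rightarrow> ind I a | Some e \<Rightarrow> e)\<rparr>"

end

theory Submission
  imports Defs
begin

text \<open>The interpretation I' differs from I only on the concept name A and on the individual
  names c_i. Both are fresh for K, so every instantiation of an axiom of K has the same truth
  value in I' as in I, and I' satisfies the new assertions A(c_i) because c_i denotes e_i.
  I' is still an interpretation over the standard names because the c_i are not standard names
  and the e_i, occurring in clashing assumptions, are.\<close>

lemma extend_interp_simps:
  "rol (extend_interp I A cs es) = rol I"
  "conc (extend_interp I A cs es) = (conc I)(A := set es)"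
  "ind (extend_interp I A cs es) a =
     (case map_of (zip cs es) a of None \<Rightarrow> ind I a | Some e \<Rightarrow> e)"
  by (simp_all add: extend_interp_def)

lemma role_ext_extend_interp: "role_ext (extend_interp I A cs es) R = role_ext I R"
  by (cases R) (simp_all add: extend_interp_simps)

lemma lc_ext_extend_interp:
  "A \<notin> lc_names C \<Longrightarrow> lc_ext (extend_interp I A cs es) C = lc_ext I C"
  by (cases C) (auto simp: extend_interp_simps role_ext_extend_interp)

lemma rc_ext_extend_interp:
  "A \<notin> rc_names D \<Longrightarrow> rc_ext NIS (extend_interp I A cs es) D = rc_ext NIS I D"
  by (cases D) (auto simp: extend_interp_simps role_ext_extend_interp lc_ext_extend_interp)

lemma ind_extend_interp_notin:
  assumes "length cs = length es" "a \<notin> set cs"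
  shows "ind (extend_interp I A cs es) a = ind I a"
proof -
  have "map_of (zip cs es) a = None"
    using assms by (auto simp: map_of_eq_None_iff dest: set_zip_leftD)
  then show ?thesis by (simp add: extend_interp_simps)
qed

lemma ind_extend_interp_in:
  assumes "length cs = length es" "c \<in> set cs"
  shows "ind (extend_interp I A cs es) c \<in> set es"
proof -
  obtain e where "map_of (zip cs es) c = Some e"
    using assms map_of_zip_is_Some by metis
  moreover from this have "e \<in> set es"
    by (meson in_set_zipE map_of_SomeD)
  ultimately show ?thesis by (simp add: extend_interp_simps)
qed

lemma inst_extend_interp:
  assumes "length cs = length es" "A \<notin> ax_concepts \<alpha>" "ax_inds \<alpha> \<inter> set cs = {}"
  shows "inst NIS (extend_interp I A cs es) \<alpha> ds = inst NIS I \<alpha> ds"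
  using assms
  by (cases "(NIS, I, \<alpha>, ds)" rule: inst.cases)
     (auto simp: role_ext_extend_interp lc_ext_extend_interp rc_ext_extend_interp
                 ind_extend_interp_notin)

lemma is_interp_extend_interp:
  assumes "is_interp NIS I" "length cs = length es"
    and "set es \<subseteq> NIS" "set cs \<inter> NIS = {}"
  shows "is_interp NIS (extend_interp I A cs es)"
  unfolding is_interp_def
proof (intro conjI allI ballI)
  let ?I = "extend_interp I A cs es"
  show "conc ?I B \<subseteq> NIS" for B
    using assms(1,3) by (simp add: extend_interp_simps is_interp_def)
  show "rol ?I R \<subseteq> NIS \<times> NIS" for R
    using assms(1) by (simp add: extend_interp_simps is_interp_def)
  show "ind ?I a \<in> NIS" for a
  proof (cases "a \<in> set cs")
    case True
    show ?thesis using assms(3) ind_extend_interp_in[OF assms(2) True] by (rule subsetD)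
  next
    case False
    then show ?thesis using assms(1) by (simp add: ind_extend_interp_notin[OF assms(2)] is_interp_def)
  qed
  show "ind ?I a = a" if "a \<in> NIS" for a
  proof -
    have "a \<notin> set cs" using that assms(4) by blast
    then have "ind ?I a = ind I a" by (rule ind_extend_interp_notin[OF assms(2)])
    also have "\<dots> = a" using assms(1) that by (simp add: is_interp_def)
    finally show ?thesis .
  qed
qed

lemma ax_inds_subset_inds_K: "\<beta> \<in> K \<Longrightarrow> ax_inds (dax_ax \<beta>) \<subseteq> inds_K K"
  unfolding inds_K_def by blast

lemma ax_concepts_subset_concepts_K: "\<beta> \<in> K \<Longrightarrow> ax_concepts (dax_ax \<beta>) \<subseteq> concepts_K K"
  unfolding concepts_K_def by blast

lemma uni_K_subset:
  assumes "cas_model NIS K I \<chi>"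
  shows "uni_K K I \<chi> \<subseteq> NIS"
  using assms unfolding cas_model_def uni_K_def is_tuple_def by blast

lemma cas_model_extend_interp:
  assumes model: "cas_model NIS K I \<chi>" and len: "length cs = length es"
    and "set es \<subseteq> NIS" "set cs \<inter> NIS = {}" "set cs \<inter> inds_K K = {}"
    and "A \<notin> concepts_K K"
  shows "cas_model NIS K (extend_interp I A cs es) \<chi>"
proof -
  have same_inst: "inst NIS (extend_interp I A cs es) \<alpha> ds = inst NIS I \<alpha> ds"
    if "\<beta> \<in> K" "dax_ax \<beta> = \<alpha>" for \<beta> \<alpha> ds
    using that assms(5,6) ax_inds_subset_inds_K[OF that(1)] ax_concepts_subset_concepts_K[OF that(1)]
    by (intro inst_extend_interp[OF len]) auto
  have "inst NIS (extend_interp I A cs es) \<alpha> ds = inst NIS I \<alpha> ds"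
    if "Strict \<alpha> \<in> K \<or> Defeasible \<alpha> \<in> K" for \<alpha> ds
    using that by (metis dax_ax.simps same_inst)
  with model is_interp_extend_interp[OF _ len assms(3,4)] show ?thesis
    unfolding cas_model_def sat_ax_def by auto
qed

lemma cas_model_Un_Strict:
  assumes "cas_model NIS K I \<chi>" "\<forall>\<alpha>\<in>S. sat_ax NIS I \<alpha>"
  shows "cas_model NIS (K \<union> Strict ` S) I \<chi>"
  using assms unfolding cas_model_def by auto

lemma sat_ax_assert_extend_interp:
  assumes "length cs = length es" "c \<in> set cs"
  shows "sat_ax NIS (extend_interp I A cs es) (CAssert (RAtom A) c)"
  using ind_extend_interp_in[OF assms]
  by (simp add: sat_ax_def is_tuple_def extend_interp_simps)

theorem proposition10:
  fixes NIS :: "'n set" and K :: "('c, 'r, 'n) dkb" and I :: "('c, 'r, 'n) interp"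
    and \<chi> :: "(('c, 'r, 'n) axiom \<times> 'n list) set"
    and cs es :: "'n list" and A :: 'c
  assumes "infinite NIS"
    and "finite K"
    and "cas_model NIS K I \<chi>"
    and "set es = uni_K K I \<chi>"
    and "length cs = length es"
    and "distinct cs"
    and "\<forall>c\<in>set cs. c \<notin> inds_K K \<and> c \<notin> NIS"
    and "A \<notin> concepts_K K"
  shows "cas_model NIS (K \<union> (\<lambda>c. Strict (CAssert (RAtom A) c)) ` set cs)
           (extend_interp I A cs es) \<chi>"
proof -
  let ?S = "(\<lambda>c. CAssert (RAtom A) c) ` set cs"
  have "set es \<subseteq> NIS"
    using assms(4) uni_K_subset[OF assms(3)] by simp
  with assms(3,5,7,8) have "cas_model NIS K (extend_interp I A cs es) \<chi>"
    by (intro cas_model_extend_interp) auto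
  moreover have "\<forall>\<alpha>\<in>?S. sat_ax NIS (extend_interp I A cs es) \<alpha>"
    by (auto intro: sat_ax_assert_extend_interp[OF assms(5)])
  ultimately have "cas_model NIS (K \<union> Strict ` ?S) (extend_interp I A cs es) \<chi>"
    by (rule cas_model_Un_Strict)
  then show ?thesis by (simp add: image_image)
qed

end
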